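(* A class of finite pointed $(\emptyset,[1])$-models is definable by a countable disjunction of $(\emptyset,[1])$-formulae of graded multimodal logic if and only if it is recognizable by the Weisfeiler–Leman algorithm.
   Context: $(\emptyset,[1])$-formulae of graded multimodal logic are generated by $\varphi ::= \top \mid \neg\varphi \mid (\varphi\land\varphi) \mid \langle 1\rangle_{\geq k}\varphi$ with $k\in\mathbb N$. A finite $(\emptyset,[1])$-model is $M=(W,R_1)$ with $W$ a nonempty finite set and $R_1\subseteq W\times W$; a pointed model is $(M,w)$ with $w\in W$; $(M,w)\models\langle1\rangle_{\geq k}\psi$ iff $|\{v:(w,v)\in R_1,\ (M,v)\models\psi\}|\geq k$, Boolean cases standard. A class $\mathcal K$ of finite pointed models is definable by a countable disjunction if there is a countable set $S$ of formulae with $(M,w)\in\mathcal K$ iff $(M,w)\models\varphi$ for some $\varphi\in S$, for every finite pointed model. Weisfeiler–Leman colors (canonical, injective color refinement): $c^M_0(w)=\ast$ (a fixed constant) for all $w$, and $c^M_{t+1}(w)=\big(c^M_t(w),\{\{c^M_t(v):(w,v)\in R_1\}\}\big)$, where $\{\{\cdot\}\}$ denotes the multiset. A class $\mathcal K$ of finite pointed $(\emptyset,[1])$-models is recognizable by the Weisfeiler–Leman algorithm if there is a set $F$ of colors such that, for every finite pointed model $(M,w)$, $(M,w)\in\mathcal K$ iff $c^M_t(w)\in F$ for some $t\in\mathbb N$. *)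

theory Defs
  imports Main "HOL-Library.Multiset" "HOL-Library.Countable_Set"
begin

datatype fm = Top | Neg fm | Conj fm fm | Dia nat fm

type_synonym 'a model = "'a set \<times> ('a \<times> 'a) set"
type_synonym 'a pmodel = "'a set \<times> ('a \<times> 'a) set \<times> 'a"

definition finite_pmodel :: "'a pmodel \<Rightarrow> bool" where
  "finite_pmodel P = (case P of (W, R, w) \<Rightarrow>
      W \<noteq> {} \<and> finite W \<and> R \<subseteq> W \<times> W \<and> w \<in> W)"

fun sat :: "'a model \<Rightarrow> 'a \<Rightarrow> fm \<Rightarrow> bool" where
  "sat M w Top = True"
| "sat M w (Neg \<phi>) = (\<not> sat M w \<phi>)"
| "sat M w (Conj \<phi> \<psi>) = (sat M w \<phi> \<and> sat M w \<psi>)"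
| "sat M w (Dia k \<phi>) = (card {v. (w, v) \<in> snd M \<and> sat M v \<phi>} \<ge> k)"

text \<open>Weisfeiler-Leman colours: canonical injective colour refinement.\<close>
datatype color = Star | Refine color "color multiset"

fun wl_color :: "'a model \<Rightarrow> nat \<Rightarrow> 'a \<Rightarrow> color" where
  "wl_color M 0 w = Star"
| "wl_color M (Suc t) w =
     Refine (wl_color M t w) (image_mset (wl_color M t) (mset_set {v. (w, v) \<in> snd M}))"

definition definable_countable_disj :: "'a pmodel set \<Rightarrow> bool" where
  "definable_countable_disj K = (\<exists>S :: fm set. countable S \<and>
     (\<forall>W R w. finite_pmodel (W, R, w) \<longrightarrow>
        ((W, R, w) \<in> K \<longleftrightarrow> (\<exists>\<phi>\<in>S. sat (W, R) w \<phi>))))"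

definition wl_recognizable :: "'a pmodel set \<Rightarrow> bool" where
  "wl_recognizable K = (\<exists>F :: color set.
     (\<forall>W R w. finite_pmodel (W, R, w) \<longrightarrow>
        ((W, R, w) \<in> K \<longleftrightarrow> (\<exists>t. wl_color (W, R) t w \<in> F))))"

end

theory Submission
  imports Defs
begin

text \<open>A formula of modal depth \<open>d\<close> is decided by the WL colour of round \<open>d\<close>: the colour of
round \<open>t + 1\<close> records the multiset of round-\<open>t\<close> colours of the successors, and this is exactly
what the graded diamonds count. So a disjunction \<open>\<Or>S\<close> is recognised by the colours of round
\<open>depth \<phi>\<close> that satisfy some \<open>\<phi> \<in> S\<close>. Conversely, every colour of round \<open>n\<close> is defined by a
characteristic formula of depth \<open>n\<close>, which fixes the number of successors of each colour of the
previous round; as there are only countably many such formulae, any set of colours is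
recognised by the disjunction of their characteristic formulae.\<close>

instance fm :: countable by countable_datatype

abbreviation successors :: "'a model \<Rightarrow> 'a \<Rightarrow> 'a set" where
  "successors M w \<equiv> {v. (w, v) \<in> snd M}"

lemma finite_pmodel_finite_successors:
  assumes "finite_pmodel (W, R, w)"
  shows "finite (successors (W, R) v)"
proof -
  have "finite R"
    using assms finite_subset unfolding finite_pmodel_def by blast
  moreover have "successors (W, R) v \<subseteq> snd ` R"
    by force
  ultimately show ?thesis
    by (simp add: finite_surj)
qed

lemma size_filter_image_mset_set:
  "finite X \<Longrightarrow> size (filter_mset P (image_mset f (mset_set X))) = card {x \<in> X. P (f x)}"
  by (simp add: filter_mset_image_mset)

fun depth :: "fm \<Rightarrow> nat" where
  "depth Top = 0"
| "depth (Neg \<phi>) = depth \<phi>"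
| "depth (Conj \<phi> \<psi>) = max (depth \<phi>) (depth \<psi>)"
| "depth (Dia k \<phi>) = Suc (depth \<phi>)"

fun color_round :: "color \<Rightarrow> nat" where
  "color_round Star = 0"
| "color_round (Refine c m) = Suc (color_round c)"

lemma color_round_wl_color: "color_round (wl_color M t w) = t"
  by (induction t) auto

text \<open>\<open>Star\<close> is read as a world without successors; this case is never reached from a model,
since diamonds raise the depth.\<close>

fun sat_color :: "color \<Rightarrow> fm \<Rightarrow> bool" where
  "sat_color c Top = True"
| "sat_color c (Neg \<phi>) = (\<not> sat_color c \<phi>)"
| "sat_color c (Conj \<phi> \<psi>) = (sat_color c \<phi> \<and> sat_color c \<psi>)"
| "sat_color Star (Dia k \<phi>) = (k = 0)"
| "sat_color (Refine c m) (Dia k \<phi>) = (k \<le> size (filter_mset (\<lambda>d. sat_color d \<phi>) m))"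

lemma sat_eq_sat_color_wl_color:
  assumes "\<And>v. finite (successors M v)" and "depth \<phi> \<le> n"
  shows "sat M w \<phi> = sat_color (wl_color M n w) \<phi>"
  using assms(2)
proof (induction \<phi> arbitrary: n w)
  case (Dia k \<psi>)
  then obtain n' where n: "n = Suc n'" and "depth \<psi> \<le> n'"
    by (cases n) auto
  with Dia.IH have "{v \<in> successors M w. sat M v \<psi>} =
      {v \<in> successors M w. sat_color (wl_color M n' v) \<psi>}"
    by blast
  then show ?case
    using n assms(1) by (simp add: size_filter_image_mset_set)
qed auto

definition satisfying_colors :: "fm set \<Rightarrow> color set" where
  "satisfying_colors S = {c. \<exists>\<phi>\<in>S. color_round c = depth \<phi> \<and> sat_color c \<phi>}"

lemma wl_color_in_satisfying_colors_iff:
  assumes "\<And>v. finite (successors M v)"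
  shows "(\<exists>t. wl_color M t w \<in> satisfying_colors S) \<longleftrightarrow> (\<exists>\<phi>\<in>S. sat M w \<phi>)"
  using sat_eq_sat_color_wl_color[OF assms order_refl]
  by (auto simp: satisfying_colors_def color_round_wl_color)

definition conj_list :: "fm list \<Rightarrow> fm" where
  "conj_list \<phi>s = foldr Conj \<phi>s Top"

lemma sat_conj_list: "sat M w (conj_list \<phi>s) \<longleftrightarrow> (\<forall>\<phi>\<in>set \<phi>s. sat M w \<phi>)"
  unfolding conj_list_def by (induction \<phi>s) auto

definition Dia_exactly :: "nat \<Rightarrow> fm \<Rightarrow> fm" where
  "Dia_exactly k \<phi> = Conj (Dia k \<phi>) (Neg (Dia (Suc k) \<phi>))"

lemma sat_Dia_exactly:
  "sat M w (Dia_exactly k \<phi>) \<longleftrightarrow> card {v \<in> successors M w. sat M v \<phi>} = k"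
  unfolding Dia_exactly_def by auto

lemma mset_eq_if_count_eq_on_set_mset:
  assumes "\<And>x. x \<in># A \<Longrightarrow> count B x = count A x" and "size B = size A"
  shows "B = A"
proof -
  have "A \<subseteq># B"
    using assms(1) by (metis mset_subset_eqI count_eq_zero_iff order_refl zero_le)
  then show ?thesis
    using assms(2) mset_subset_size by (metis subset_mset.le_imp_less_or_eq less_irrefl)
qed

text \<open>Any listing of \<open>m\<close> will do; \<open>SOME\<close> merely picks one.\<close>

fun char_fm :: "nat \<Rightarrow> color \<Rightarrow> fm" where
  "char_fm 0 c = (if c = Star then Top else Neg Top)"
| "char_fm (Suc n) Star = Neg Top"
| "char_fm (Suc n) (Refine c m) =
     Conj (char_fm n c)
      (Conj (Dia_exactly (size m) Top)
        (conj_list (map (\<lambda>d. Dia_exactly (count m d) (char_fm n d)) (SOME ds. mset ds = m))))"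

lemma sat_char_fm:
  assumes "\<And>v. finite (successors M v)"
  shows "sat M w (char_fm n c) \<longleftrightarrow> wl_color M n w = c"
proof (induction n arbitrary: w c)
  case (Suc n)
  show ?case
  proof (cases c)
    case (Refine c' m)
    define A where "A = image_mset (wl_color M n) (mset_set (successors M w))"
    have set_listing: "set (SOME ds. mset ds = m) = set_mset m"
      by (metis (mono_tags) ex_mset someI_ex set_mset_mset)
    have count_A: "card {v \<in> successors M w. sat M v (char_fm n d)} = count A d" for d
      using Suc.IH assms by (simp add: A_def count_conv_size_mset size_filter_image_mset_set)
    have size_A: "card {v \<in> successors M w. sat M v Top} = size A"
      using assms by (simp add: A_def)
    have "sat M w (char_fm (Suc n) c) \<longleftrightarrow>
        wl_color M n w = c' \<and> size A = size m \<and> (\<forall>d \<in># m. count A d = count m d)"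
      using Refine set_listing Suc.IH count_A size_A by (auto simp: sat_conj_list sat_Dia_exactly)
    also have "\<dots> \<longleftrightarrow> wl_color M n w = c' \<and> A = m"
      using mset_eq_if_count_eq_on_set_mset[of m A] by auto
    finally show ?thesis
      using Refine A_def by simp
  qed simp
qed simp

lemma sat_some_char_fm_iff:
  assumes "\<And>v. finite (successors M v)"
  shows "(\<exists>\<phi>\<in>{char_fm n c | n c. c \<in> F}. sat M w \<phi>) \<longleftrightarrow> (\<exists>t. wl_color M t w \<in> F)"
  using sat_char_fm[OF assms] by auto

theorem corollary3:
  fixes K :: "'a pmodel set"
  shows "definable_countable_disj K \<longleftrightarrow> wl_recognizable K"
proof
  assume "definable_countable_disj K"
  then obtain S where S: "\<forall>W R w. finite_pmodel (W, R, w) \<longrightarrow>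
      ((W, R, w) \<in> K \<longleftrightarrow> (\<exists>\<phi>\<in>S. sat (W, R) w \<phi>))"
    unfolding definable_countable_disj_def by blast
  have "(W, R, w) \<in> K \<longleftrightarrow> (\<exists>t. wl_color (W, R) t w \<in> satisfying_colors S)"
    if "finite_pmodel (W, R, w)" for W R w
    using S that wl_color_in_satisfying_colors_iff[OF finite_pmodel_finite_successors[OF that]]
    by simp
  then show "wl_recognizable K"
    unfolding wl_recognizable_def by blast
next
  assume "wl_recognizable K"
  then obtain F where F: "\<forall>W R w. finite_pmodel (W, R, w) \<longrightarrow>
      ((W, R, w) \<in> K \<longleftrightarrow> (\<exists>t. wl_color (W, R) t w \<in> F))"
    unfolding wl_recognizable_def by blast
  have "(W, R, w) \<in> K \<longleftrightarrow> (\<exists>\<phi>\<in>{char_fm n c | n c. c \<in> F}. sat (W, R) w \<phi>)"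
    if "finite_pmodel (W, R, w)" for W R w
    using F that sat_some_char_fm_iff[OF finite_pmodel_finite_successors[OF that]]
    by simp
  moreover have "countable {char_fm n c | n c. c \<in> F}"
    by simp
  ultimately show "definable_countable_disj K"
    unfolding definable_countable_disj_def by blast
qed

end
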